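(* Let $S = R\cup B$ be a finite set of points in the plane in general position (no three collinear), colored red ($R$) and blue ($B$). If there are $a,b\in R$ and $c,d\in B$ such that the segments $\overline{ab}$ and $\overline{cd}$ intersect, then $S$ contains a balanced convex $4$-hole.
   Context: A $4$-hole of $S$ is a simple quadrilateral with vertices in $S$ and no point of $S$ in its interior; it is convex if the quadrilateral is convex, and balanced if it has exactly two red and two blue vertices. *)

theory Defs
  imports "HOL-Analysis.Analysis"
begin

definition general_position :: "(real^2) set \<Rightarrow> bool" where
  "general_position S \<longleftrightarrow>
     (\<forall>x\<in>S. \<forall>y\<in>S. \<forall>z\<in>S. x \<noteq> y \<and> y \<noteq> z \<and> x \<noteq> z \<longrightarrow> \<not> collinear {x, y, z})"

definition convex_position :: "(real^2) set \<Rightarrow> bool" where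
  "convex_position Q \<longleftrightarrow> (\<forall>p\<in>Q. p \<notin> convex hull (Q - {p}))"

definition convex_4hole :: "(real^2) set \<Rightarrow> (real^2) set \<Rightarrow> bool" where
  "convex_4hole S Q \<longleftrightarrow> Q \<subseteq> S \<and> card Q = 4 \<and> convex_position Q \<and>
      S \<inter> interior (convex hull Q) = {}"

definition balanced_convex_4hole :: "(real^2) set \<Rightarrow> (real^2) set \<Rightarrow> (real^2) set \<Rightarrow> bool" where
  "balanced_convex_4hole R B Q \<longleftrightarrow> convex_4hole (R \<union> B) Q \<and>
      card (Q \<inter> R) = 2 \<and> card (Q \<inter> B) = 2"

end

theory Submission
  imports Defs
begin

text \<open>Induction on the number of points of \<open>S\<close> in the convex hull of a red segment \<open>ab\<close>
  crossing a blue segment \<open>cd\<close>. By general position \<open>a, b, c, d\<close> are the vertices of a convex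
  quadrilateral whose diagonals are \<open>ab\<close> and \<open>cd\<close>. If no point of \<open>S\<close> lies in its interior,
  it is the required hole. Otherwise the diagonal \<open>cd\<close> cuts the quadrilateral into the triangles
  \<open>acd\<close> and \<open>bcd\<close>; an interior red point \<open>p\<close> lies in one of them, say \<open>acd\<close>, and then \<open>pb\<close>
  still crosses \<open>cd\<close> while the convex hull of \<open>p, b, c, d\<close> lies inside the old one and misses
  the extreme point \<open>a\<close>. Blue interior points are handled in the same way with the diagonal \<open>ab\<close>.\<close>

text \<open>Twice the signed area of the triangle \<open>c d x\<close>: its sign tells on which side of the line
  \<open>cd\<close> the point \<open>x\<close> lies.\<close>
definition orient :: "real^2 \<Rightarrow> real^2 \<Rightarrow> real^2 \<Rightarrow> real" where
  "orient c d x = (d$1 - c$1) * (x$2 - c$2) - (d$2 - c$2) * (x$1 - c$1)"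

lemma orient_left [simp]: "orient c d c = 0" and orient_right [simp]: "orient c d d = 0"
  by (simp_all add: orient_def)

lemma orient_affine_combination:
  assumes "u + v = 1"
  shows "orient c d (u *\<^sub>R x + v *\<^sub>R y) = u * orient c d x + v * orient c d y"
proof -
  have "v = 1 - u" using assms by simp
  then show ?thesis by (simp only:) (simp add: orient_def algebra_simps)
qed

lemma parallel_if_cross_eq_0:
  fixes u v :: "real^2"
  assumes "u$1 * v$2 = u$2 * v$1" and "u \<noteq> 0"
  shows "\<exists>k. v = k *\<^sub>R u"
proof (cases "u$1 = 0")
  case True
  with assms have "u$2 \<noteq> 0" by (auto simp: vec_eq_iff forall_2)
  with True assms have "v$1 = 0" by simp
  with True \<open>u$2 \<noteq> 0\<close> show ?thesis
    by (intro exI[of _ "v$2 / u$2"]) (simp add: vec_eq_iff forall_2)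
next
  case False
  with assms show ?thesis
    by (intro exI[of _ "v$1 / u$1"]) (simp add: vec_eq_iff forall_2 field_simps)
qed

lemma collinear_if_orient_eq_0:
  assumes "orient c d x = 0"
  shows "collinear {c, d, x}"
proof (cases "d = c")
  case False
  with assms have "\<exists>k. x - c = k *\<^sub>R (d - c)"
    by (intro parallel_if_cross_eq_0) (auto simp: orient_def)
  then have "collinear {0, d - c, x - c}" by (simp add: collinear_lemma)
  then have "collinear {d, c, x}" by (simp add: collinear_3[of d c x])
  then show ?thesis by (simp add: insert_commute)
qed simp

lemma convex_orient_halfplane: "convex {x. 0 \<le> k * orient c d x}"
proof (rule convexI, clarsimp)
  fix x y :: "real^2" and u v :: real
  assume "0 \<le> k * orient c d x" "0 \<le> k * orient c d y" "0 \<le> u" "0 \<le> v" "u + v = 1"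
  moreover from \<open>u + v = 1\<close> have
    "k * orient c d (u *\<^sub>R x + v *\<^sub>R y) = u * (k * orient c d x) + v * (k * orient c d y)"
    by (simp add: orient_affine_combination algebra_simps)
  ultimately show "0 \<le> k * orient c d (u *\<^sub>R x + v *\<^sub>R y)" by simp
qed

lemma crossing_opposite_sides:
  assumes "m \<in> closed_segment a b" "m \<in> closed_segment c d"
    and "orient c d a \<noteq> 0" "orient c d b \<noteq> 0"
  shows "orient c d a * orient c d b < 0"
proof -
  obtain s where s: "0 \<le> s" "s \<le> 1" "m = (1 - s) *\<^sub>R a + s *\<^sub>R b"
    using assms(1) by (auto simp: in_segment)
  obtain t where "m = (1 - t) *\<^sub>R c + t *\<^sub>R d"
    using assms(2) by (auto simp: in_segment)
  then have "orient c d m = 0" by (simp add: orient_affine_combination)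
  with s have eq: "(1 - s) * orient c d a = - (s * orient c d b)"
    by (simp add: orient_affine_combination)
  then have "((1 - s) * orient c d a) * orient c d b = - (s * orient c d b) * orient c d b"
    by simp
  then have "(1 - s) * (orient c d a * orient c d b) = - (s * (orient c d b)\<^sup>2)"
    by (simp add: power2_eq_square mult_ac)
  moreover have "s \<noteq> 0" "s \<noteq> 1" using eq assms(3,4) by auto
  with s have "0 < s" "s < 1" by auto
  moreover have "0 < s * (orient c d b)\<^sup>2" using \<open>0 < s\<close> assms(4) by simp
  ultimately have "(1 - s) * (orient c d a * orient c d b) < 0" by linarith
  with \<open>s < 1\<close> show ?thesis by (simp add: mult_less_0_iff)
qed

lemma crossing_vertex_not_in_convex_hull:
  assumes "m \<in> closed_segment a b" "m \<in> closed_segment c d"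
    and "orient c d a \<noteq> 0" "orient c d b \<noteq> 0"
  shows "a \<notin> convex hull {b, c, d}"
proof
  let ?k = "orient c d b"
  have "convex hull {b, c, d} \<subseteq> {x. 0 \<le> ?k * orient c d x}"
    by (rule hull_minimal) (auto simp: convex_orient_halfplane)
  moreover assume "a \<in> convex hull {b, c, d}"
  ultimately have "0 \<le> orient c d b * orient c d a" by blast
  then show False
    using crossing_opposite_sides[OF assms] by (metis mult.commute leD)
qed

lemma convex_hull_3_split:
  fixes a b k :: "'a::euclidean_space"
  assumes "m \<in> closed_segment a b"
  shows "convex hull {a, b, k} \<subseteq> convex hull {a, m, k} \<union> convex hull {m, b, k}"
proof
  fix x assume x: "x \<in> convex hull {a, b, k}"
  have "m \<in> convex hull {a, b, k}"
    using assms hull_mono[of "{a, b}" "{a, b, k}"] by (auto simp: segment_convex_hull)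
  then obtain v where "v \<in> {a, b, k}" and v: "x \<in> convex hull (insert m ({a, b, k} - {v}))"
    using x by (rule in_convex_hull_exchange)
  then have "insert m ({a, b, k} - {v}) \<subseteq> {m, b, k} \<or> insert m ({a, b, k} - {v}) \<subseteq> {a, m, k}
      \<or> insert m ({a, b, k} - {v}) \<subseteq> {a, m, b}"
    by blast
  then consider "x \<in> convex hull {m, b, k}" | "x \<in> convex hull {a, m, k}" | "x \<in> convex hull {a, m, b}"
    using v hull_mono[of _ _ convex] by (meson subsetD)
  then show "x \<in> convex hull {a, m, k} \<union> convex hull {m, b, k}"
  proof cases
    case 3
    have "convex hull {a, m, b} = convex hull (insert m {a, b})"
      by (simp add: insert_commute)
    also have "\<dots> = closed_segment a b"
      using assms by (simp add: hull_redundant segment_convex_hull)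
    also have "\<dots> = closed_segment a m \<union> closed_segment m b"
      using assms by (rule Un_closed_segment[symmetric])
    finally have "x \<in> closed_segment a m \<union> closed_segment m b"
      using 3 by simp
    then show ?thesis
      using hull_mono[of "{a, m}" "{a, m, k}"] hull_mono[of "{m, b}" "{m, b, k}"]
      by (auto simp: segment_convex_hull)
  qed auto
qed

lemma convex_hull_4_split:
  fixes a b c d :: "'a::euclidean_space"
  assumes "m \<in> closed_segment a b" "m \<in> closed_segment c d"
  shows "convex hull {a, b, c, d} \<subseteq> convex hull {a, c, d} \<union> convex hull {b, c, d}"
proof
  fix x assume x: "x \<in> convex hull {a, b, c, d}"
  have ab: "m \<in> convex hull {a, b}" and cd: "m \<in> convex hull {c, d}"
    using assms by (simp_all add: segment_convex_hull)
  have m: "m \<in> convex hull {b, c, d}" "m \<in> convex hull {a, c, d}"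
    "m \<in> convex hull {a, b, d}" "m \<in> convex hull {a, b, c}" "m \<in> convex hull {a, b, c, d}"
    using hull_mono[of "{c, d}" "{b, c, d}"] hull_mono[of "{c, d}" "{a, c, d}"]
      hull_mono[of "{a, b}" "{a, b, d}"] hull_mono[of "{a, b}" "{a, b, c}"]
      hull_mono[of "{a, b}" "{a, b, c, d}"] ab cd
    by blast+
  from m(5) x obtain v where "v \<in> {a, b, c, d}"
    and v: "x \<in> convex hull (insert m ({a, b, c, d} - {v}))"
    by (rule in_convex_hull_exchange)
  have into: "x \<in> convex hull T" if "{a, b, c, d} - {v} \<subseteq> T" "m \<in> convex hull T" for T
  proof -
    have "insert m ({a, b, c, d} - {v}) \<subseteq> convex hull T"
      using that hull_subset[of T convex] by blast
    then show ?thesis using v convex_hull_subset by blast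
  qed
  from \<open>v \<in> {a, b, c, d}\<close> consider "x \<in> convex hull {b, c, d}" | "x \<in> convex hull {a, c, d}"
    | "x \<in> convex hull {a, b, d}" | "x \<in> convex hull {a, b, c}"
    using into[of "{b, c, d}"] into[of "{a, c, d}"] into[of "{a, b, d}"] into[of "{a, b, c}"] m(1-4)
    by blast
  then show "x \<in> convex hull {a, c, d} \<union> convex hull {b, c, d}"
  proof cases
    case 3
    then have "x \<in> convex hull {a, m, d} \<union> convex hull {m, b, d}"
      using convex_hull_3_split[OF assms(1)] by blast
    moreover have "convex hull {a, m, d} \<subseteq> convex hull {a, c, d}"
      and "convex hull {m, b, d} \<subseteq> convex hull {b, c, d}"
      using m(1,2) by (auto intro!: convex_hull_subset simp: hull_inc)
    ultimately show ?thesis by blast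
  next
    case 4
    then have "x \<in> convex hull {a, m, c} \<union> convex hull {m, b, c}"
      using convex_hull_3_split[OF assms(1)] by blast
    moreover have "convex hull {a, m, c} \<subseteq> convex hull {a, c, d}"
      and "convex hull {m, b, c} \<subseteq> convex hull {b, c, d}"
      using m(1,2) by (auto intro!: convex_hull_subset simp: hull_inc)
    ultimately show ?thesis by blast
  qed auto
qed

lemma closed_segment_meets_if_in_triangle:
  fixes a b c d :: "'a::real_vector"
  assumes m: "m \<in> closed_segment a b" "m \<in> closed_segment c d"
    and p: "p \<in> convex hull {a, c, d}"
  shows "closed_segment p b \<inter> closed_segment c d \<noteq> {}"
proof -
  obtain s where s: "0 \<le> s" "s \<le> 1" and m_eq: "m = (1 - s) *\<^sub>R a + s *\<^sub>R b"
    using m(1) by (auto simp: in_segment)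
  obtain \<alpha> \<gamma> \<delta> where coeffs: "0 \<le> \<alpha>" "0 \<le> \<gamma>" "0 \<le> \<delta>" "\<alpha> + \<gamma> + \<delta> = 1"
    and p_eq: "p = \<alpha> *\<^sub>R a + \<gamma> *\<^sub>R c + \<delta> *\<^sub>R d"
    using p by (auto simp: convex_hull_3)
  show ?thesis
  proof (cases "s = 1")
    case True
    with m show ?thesis by (auto simp: m_eq)
  next
    case False
    text \<open>The witness \<open>q\<close> is a convex combination both of \<open>p, b\<close> and of \<open>m, c, d\<close>.\<close>
    define w where "w = 1 - s + \<alpha> * s"
    have "0 \<le> \<alpha> * s" using s coeffs(1) by simp
    then have w: "0 < w" "\<alpha> * s \<le> w"
      using s False by (auto simp: w_def)
    define q where "q = ((1 - s) / w) *\<^sub>R p + (\<alpha> * s / w) *\<^sub>R b"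
    have q_pb: "q \<in> closed_segment p b"
      unfolding in_segment q_def
      using w s coeffs(1) by (intro exI[of _ "\<alpha> * s / w"]) (auto simp: w_def field_simps)
    have q_eq: "q = (\<alpha> / w) *\<^sub>R m + ((1 - s) * \<gamma> / w) *\<^sub>R c + ((1 - s) * \<delta> / w) *\<^sub>R d"
      by (simp add: q_def p_eq m_eq algebra_simps diff_divide_distrib)
    have "\<delta> = 1 - \<alpha> - \<gamma>" using coeffs(4) by simp
    then have "\<alpha> + (1 - s) * \<gamma> + (1 - s) * \<delta> = w"
      by (simp only:) (simp add: w_def algebra_simps)
    then have sum: "\<alpha> / w + (1 - s) * \<gamma> / w + (1 - s) * \<delta> / w = 1"
      using w by (simp flip: add_divide_distrib)
    have "0 \<le> \<alpha> / w" "0 \<le> (1 - s) * \<gamma> / w" "0 \<le> (1 - s) * \<delta> / w"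
      using w s coeffs by simp_all
    with q_eq sum have "q \<in> convex hull {m, c, d}"
      unfolding convex_hull_3 by blast
    moreover have "convex hull {m, c, d} \<subseteq> closed_segment c d"
      using m(2) by (intro hull_minimal) auto
    ultimately show ?thesis using q_pb by blast
  qed
qed

lemma extreme_point_of_convex_hull_imp_mem:
  assumes "x extreme_point_of convex hull S" "T \<subseteq> convex hull S" "x \<in> convex hull T"
  shows "x \<in> T"
proof -
  have "convex hull T \<subseteq> convex hull S" using assms(2) by (rule convex_hull_subset)
  then have "x extreme_point_of convex hull T"
    using assms(1,3) by (auto simp: extreme_point_of_def)
  then show ?thesis by (rule extreme_point_of_convex_hull)
qed

lemma crossing_replace_vertex:
  fixes a b c d :: "'a::euclidean_space"
  assumes m: "m \<in> closed_segment a b" "m \<in> closed_segment c d"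
    and a: "a \<notin> convex hull {b, c, d}"
    and p: "p \<in> convex hull {a, c, d}" "p \<noteq> a"
  shows "closed_segment p b \<inter> closed_segment c d \<noteq> {}"
    and "convex hull {p, b, c, d} \<subseteq> convex hull {a, b, c, d} - {a}"
proof -
  show "closed_segment p b \<inter> closed_segment c d \<noteq> {}"
    using m p(1) by (rule closed_segment_meets_if_in_triangle)
  have "p \<in> convex hull {a, b, c, d}"
    using p(1) hull_mono[of "{a, c, d}" "{a, b, c, d}"] by blast
  then have sub: "{p, b, c, d} \<subseteq> convex hull {a, b, c, d}"
    using hull_subset[of "{a, b, c, d}" convex] by blast
  have "a extreme_point_of convex hull {a, b, c, d}"
    using a by (simp add: extreme_point_of_convex_hull_insert)
  then have "a \<notin> convex hull {p, b, c, d}"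
    using extreme_point_of_convex_hull_imp_mem[OF _ sub] a p(2) hull_subset[of "{b, c, d}" convex]
    by blast
  with sub show "convex hull {p, b, c, d} \<subseteq> convex hull {a, b, c, d} - {a}"
    using convex_hull_subset by blast
qed

lemma general_positionD:
  "general_position S \<Longrightarrow> {x, y, z} \<subseteq> S \<Longrightarrow> x \<noteq> y \<Longrightarrow> y \<noteq> z \<Longrightarrow> x \<noteq> z \<Longrightarrow>
    \<not> collinear {x, y, z}"
  unfolding general_position_def by blast

lemma general_position_crossing_ends_distinct:
  assumes "general_position S" "{a, b, c, d} \<subseteq> S" "{a, b} \<inter> {c, d} = {}"
    and "m \<in> closed_segment a b" "m \<in> closed_segment c d"
  shows "c \<noteq> d"
proof
  assume "c = d"
  then have "c \<in> closed_segment a b" using assms(4,5) by simp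
  moreover from this have "a \<noteq> b" using assms(3) by auto
  ultimately have "collinear {a, b, c}"
    by (meson collinear_closed_segment collinear_subset ends_in_segment empty_subsetI insert_subset)
  then show False
    using general_positionD[OF assms(1), of a b c] assms(2,3) \<open>a \<noteq> b\<close> by auto
qed

lemma general_position_crossing_vertices_not_in_convex_hull:
  assumes gp: "general_position S" and S: "{a, b, c, d} \<subseteq> S" and disj: "{a, b} \<inter> {c, d} = {}"
    and "closed_segment a b \<inter> closed_segment c d \<noteq> {}"
  shows "a \<notin> convex hull {b, c, d}" "b \<notin> convex hull {a, c, d}"
    "c \<notin> convex hull {a, b, d}" "d \<notin> convex hull {a, b, c}"
proof -
  have vertex: "a \<notin> convex hull {b, c, d}"
    if S: "{a, b, c, d} \<subseteq> S" and disj: "{a, b} \<inter> {c, d} = {}"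
      and m: "m \<in> closed_segment a b" "m \<in> closed_segment c d" for a b c d m
  proof (rule crossing_vertex_not_in_convex_hull[OF m])
    have "c \<noteq> d" using general_position_crossing_ends_distinct[OF gp S disj m] .
    then show "orient c d a \<noteq> 0" "orient c d b \<noteq> 0"
      using general_positionD[OF gp, of c d a] general_positionD[OF gp, of c d b] S disj
      by (auto dest: collinear_if_orient_eq_0)
  qed
  obtain m where m: "m \<in> closed_segment a b" "m \<in> closed_segment c d"
    using assms(4) by blast
  show "a \<notin> convex hull {b, c, d}"
    using vertex[of a b c d] S disj m by simp
  show "b \<notin> convex hull {a, c, d}"
    using vertex[of b a c d] S disj m by (simp add: insert_commute closed_segment_commute)
  show "c \<notin> convex hull {a, b, d}"
    using vertex[of c d a b] S disj m by (auto simp: insert_commute)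
  show "d \<notin> convex hull {a, b, c}"
    using vertex[of d c a b] S disj m by (auto simp: insert_commute closed_segment_commute)
qed

definition red_blue_crossing ::
    "(real^2) set \<Rightarrow> (real^2) set \<Rightarrow> real^2 \<Rightarrow> real^2 \<Rightarrow> real^2 \<Rightarrow> real^2 \<Rightarrow> bool" where
  "red_blue_crossing R B a b c d \<longleftrightarrow> a \<in> R \<and> b \<in> R \<and> c \<in> B \<and> d \<in> B \<and>
     closed_segment a b \<inter> closed_segment c d \<noteq> {}"

lemma red_blue_crossing_balanced_convex_4hole:
  assumes "general_position (R \<union> B)" "R \<inter> B = {}" and cr: "red_blue_crossing R B a b c d"
    and empty: "(R \<union> B) \<inter> interior (convex hull {a, b, c, d}) = {}"
  shows "balanced_convex_4hole R B {a, b, c, d}"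
proof -
  have S: "{a, b, c, d} \<subseteq> R \<union> B" and disj: "{a, b} \<inter> {c, d} = {}"
    using cr assms(2) by (auto simp: red_blue_crossing_def)
  have "closed_segment a b \<inter> closed_segment c d \<noteq> {}"
    using cr by (simp add: red_blue_crossing_def)
  note out = general_position_crossing_vertices_not_in_convex_hull[OF assms(1) S disj this]
  then have "a \<noteq> b" "a \<noteq> c" "a \<noteq> d" "b \<noteq> c" "b \<noteq> d" "c \<noteq> d"
    by (auto simp: hull_inc)
  then have "convex_position {a, b, c, d}" "card {a, b, c, d} = 4"
    using out by (auto simp: convex_position_def insert_Diff_if insert_commute)
  moreover have "{a, b, c, d} \<inter> R = {a, b}" "{a, b, c, d} \<inter> B = {c, d}"
    using cr assms(2) by (auto simp: red_blue_crossing_def)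
  ultimately show ?thesis
    using S empty \<open>a \<noteq> b\<close> \<open>c \<noteq> d\<close>
    by (simp add: balanced_convex_4hole_def convex_4hole_def)
qed

lemma red_blue_crossing_shrink:
  assumes gp: "general_position (R \<union> B)" and "R \<inter> B = {}" and cr: "red_blue_crossing R B a b c d"
    and p: "p \<in> R \<union> B" "p \<in> interior (convex hull {a, b, c, d})"
  obtains a' b' c' d' v where "red_blue_crossing R B a' b' c' d'" "v \<in> {a, b, c, d}"
    "convex hull {a', b', c', d'} \<subseteq> convex hull {a, b, c, d} - {v}"
proof -
  have S: "{a, b, c, d} \<subseteq> R \<union> B" and disj: "{a, b} \<inter> {c, d} = {}"
    using cr assms(2) by (auto simp: red_blue_crossing_def)
  have seg: "closed_segment a b \<inter> closed_segment c d \<noteq> {}"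
    using cr by (simp add: red_blue_crossing_def)
  then obtain m where m: "m \<in> closed_segment a b" "m \<in> closed_segment c d"
    by blast
  note out = general_position_crossing_vertices_not_in_convex_hull[OF gp S disj seg]
  have "{b, a, c, d} = {a, b, c, d}" "{c, a, b, d} = {a, b, c, d}" "{d, a, b, c} = {a, b, c, d}"
    by auto
  then have "v extreme_point_of convex hull {a, b, c, d}" if "v \<in> {a, b, c, d}" for v
    using that out(1-4) extreme_point_of_convex_hull_insert by (metis finite.intros empty_iff insertE)
  then have p_ne: "p \<noteq> a" "p \<noteq> b" "p \<noteq> c" "p \<noteq> d"
    using p(2) extreme_point_not_in_interior by blast+
  have p_hull: "p \<in> convex hull {a, b, c, d}"
    using p(2) interior_subset by blast
  show ?thesis
  proof (cases "p \<in> R")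
    case True
    then consider "p \<in> convex hull {a, c, d}" | "p \<in> convex hull {b, c, d}"
      using p_hull convex_hull_4_split[OF m] by blast
    then show ?thesis
    proof cases
      case 1
      note new = crossing_replace_vertex[OF m out(1) 1 p_ne(1)]
      show ?thesis
        by (rule that[of p b c d a]) (use new True cr in \<open>auto simp: red_blue_crossing_def\<close>)
    next
      case 2
      note new = crossing_replace_vertex[of m b a c d p, unfolded closed_segment_commute[of b a]]
      show ?thesis
        by (rule that[of a p c d b])
          (use new m out(2) 2 p_ne(2) True cr in
            \<open>auto simp: red_blue_crossing_def insert_commute closed_segment_commute\<close>)
    qed
  next
    case False
    then have "p \<in> B" using p(1) by blast
    have m': "m \<in> closed_segment c d" "m \<in> closed_segment a b" using m by auto
    consider "p \<in> convex hull {c, a, b}" | "p \<in> convex hull {d, a, b}"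
      using p_hull convex_hull_4_split[OF m'] by (auto simp: insert_commute)
    then show ?thesis
    proof cases
      case 1
      note new = crossing_replace_vertex[of m c d a b p]
      show ?thesis
        by (rule that[of a b p d c])
          (use new m' out(3) 1 p_ne(3) \<open>p \<in> B\<close> cr in
            \<open>auto simp: red_blue_crossing_def insert_commute Int_commute\<close>)
    next
      case 2
      note new = crossing_replace_vertex[of m d c a b p, unfolded closed_segment_commute[of d c]]
      show ?thesis
        by (rule that[of a b c p d])
          (use new m' out(4) 2 p_ne(4) \<open>p \<in> B\<close> cr in
            \<open>auto simp: red_blue_crossing_def insert_commute closed_segment_commute Int_commute\<close>)
    qed
  qed
qed

lemma red_blue_crossing_imp_balanced_convex_4hole:
  assumes "finite R" "finite B" "R \<inter> B = {}" "general_position (R \<union> B)"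
    and "red_blue_crossing R B a b c d"
  shows "\<exists>Q. balanced_convex_4hole R B Q"
  using assms(5)
proof (induction "card ((R \<union> B) \<inter> convex hull {a, b, c, d})" arbitrary: a b c d rule: less_induct)
  case (less a b c d)
  show ?case
  proof (cases "(R \<union> B) \<inter> interior (convex hull {a, b, c, d}) = {}")
    case True
    with assms(3,4) less.prems show ?thesis
      by (blast intro: red_blue_crossing_balanced_convex_4hole)
  next
    case False
    then obtain p where "p \<in> R \<union> B" "p \<in> interior (convex hull {a, b, c, d})" by blast
    then obtain a' b' c' d' v where cr': "red_blue_crossing R B a' b' c' d'" and "v \<in> {a, b, c, d}"
      and "convex hull {a', b', c', d'} \<subseteq> convex hull {a, b, c, d} - {v}"
      using red_blue_crossing_shrink[OF assms(4,3) less.prems] by blast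
    moreover have "v \<in> (R \<union> B) \<inter> convex hull {a, b, c, d}"
      using \<open>v \<in> {a, b, c, d}\<close> less.prems hull_subset[of "{a, b, c, d}" convex]
      by (auto simp: red_blue_crossing_def)
    ultimately have "(R \<union> B) \<inter> convex hull {a', b', c', d'} \<subset> (R \<union> B) \<inter> convex hull {a, b, c, d}"
      by blast
    then have "card ((R \<union> B) \<inter> convex hull {a', b', c', d'})
        < card ((R \<union> B) \<inter> convex hull {a, b, c, d})"
      using assms(1,2) by (intro psubset_card_mono) auto
    then show ?thesis using less.hyps cr' by blast
  qed
qed

theorem lemma4:
  fixes R B :: "(real^2) set" and a b c d :: "real^2"
  assumes "finite R" and "finite B" and "R \<inter> B = {}"
    and "general_position (R \<union> B)"
    and "a \<in> R" and "b \<in> R" and "c \<in> B" and "d \<in> B"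
    and "closed_segment a b \<inter> closed_segment c d \<noteq> {}"
  shows "\<exists>Q. balanced_convex_4hole R B Q"
  using assms by (intro red_blue_crossing_imp_balanced_convex_4hole) (auto simp: red_blue_crossing_def)

end
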